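(* Let $n$ be odd and $k\ge 4$ even with $2k\le n$ and $n\equiv \pm 2 \pmod{k-1}$, and put $s=\frac{(n-4)(k-2)}{2(k-1)}$. Then there is a map $\sigma:\mathbb{Z}_n\to\mathbb{Z}_n$ such that for every edge $x_ix_j$ of $\mathrm{Pb}(n,k)$, the circular distance between $\sigma(i)$ and $\sigma(j)$ in $\mathbb{Z}_n$ is at least $s$; i.e., $\sigma$ is a homomorphism $\mathrm{Pb}(n,k)\to K_{n/s}$.
   Context: $\mathrm{Pb}(n,k)$ is the graph with vertex set $\{x_0,\dots,x_{n-1}\}$ (indices in $\mathbb{Z}_n$) in which $x_i$ is adjacent to $x_{i\pm1}$ and to $x_{i\pm k}$ (it is obtained from the generalized Petersen graph $\mathrm{Pet}(n,k)$ by identifying $u_i$ with $v_i$ for each $i$). For a real $s$ with $0<s\le n/2$, $K_{n/s}$ denotes the graph on $\mathbb{Z}_n=\{0,\dots,n-1\}$ in which $i\sim j$ iff $s\le |i-j|\le n-s$ (equivalently, the circular distance $\min(|i-j|,n-|i-j|)$ is at least $s$). *)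

theory Defs
  imports Main "HOL-Number_Theory.Cong" Complex_Main
begin

definition Pb_edge :: "nat \<Rightarrow> nat \<Rightarrow> nat \<Rightarrow> nat \<Rightarrow> bool" where
  "Pb_edge n k i j \<longleftrightarrow> i < n \<and> j < n \<and>
     ([int j = int i + 1] (mod int n) \<or> [int j = int i - 1] (mod int n) \<or>
      [int j = int i + int k] (mod int n) \<or> [int j = int i - int k] (mod int n))"

definition circ_dist :: "nat \<Rightarrow> nat \<Rightarrow> nat \<Rightarrow> nat" where
  "circ_dist n a b = min (if a \<le> b then b - a else a - b) (n - (if a \<le> b then b - a else a - b))"

definition K_circ_edge :: "nat \<Rightarrow> real \<Rightarrow> nat \<Rightarrow> nat \<Rightarrow> bool" where
  "K_circ_edge n s a b \<longleftrightarrow> a < n \<and> b < n \<and> s \<le> real (circ_dist n a b)"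

end

theory Submission
  imports Defs
begin

text \<open>Write \<open>n = q (k - 1) + 2 e\<close> with \<open>e = \<plusminus>1\<close>; then \<open>q\<close> is odd and \<open>c = (n - q) / 2\<close>
  satisfies \<open>c k \<equiv> c + e (mod n)\<close>. Hence the multiplier map \<open>i \<mapsto> c i\<close> sends the edges
  with index difference \<open>\<plusminus>1\<close> and \<open>\<plusminus>k\<close> to pairs at circular distance \<open>c\<close> and \<open>c + e\<close>
  respectively, and both are at least \<open>(n - 4)(k - 2) / (2 (k - 1))\<close>.\<close>

definition circ_norm :: "int \<Rightarrow> int \<Rightarrow> int" where
  "circ_norm m x = min (x mod m) (m - x mod m)"

lemma circ_norm_cong: "x mod m = y mod m \<Longrightarrow> circ_norm m x = circ_norm m y"
  by (simp add: circ_norm_def)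

lemma circ_norm_uminus: "m > 0 \<Longrightarrow> circ_norm m (- x) = circ_norm m x"
  by (auto simp: circ_norm_def zmod_zminus1_eq_if)

lemma circ_norm_eq_self:
  assumes "0 \<le> x" "2 * x \<le> m"
  shows "circ_norm m x = x"
proof -
  have "x < m \<or> x = 0" using assms by linarith
  then show ?thesis using assms by (auto simp: circ_norm_def)
qed

lemma circ_dist_eq_circ_norm:
  assumes "a < n" "b < n"
  shows "int (circ_dist n a b) = circ_norm (int n) (int b - int a)"
proof (cases "a \<le> b")
  case True
  then have "(int b - int a) mod int n = int b - int a" using assms by simp
  then show ?thesis using True assms by (simp add: circ_dist_def circ_norm_def of_nat_diff)
next
  case False
  have "(int b - int a) mod int n = (int b - int a + int n) mod int n" by simp
  also have "\<dots> = int b - int a + int n" using assms False by (intro mod_pos_pos_trivial) auto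
  finally show ?thesis using False assms by (simp add: circ_dist_def circ_norm_def of_nat_diff)
qed

lemma Pb_edge_diff_mod:
  assumes "Pb_edge n k i j"
  obtains d where "d \<in> {1, -1, int k, - int k}" "(int j - int i) mod int n = d mod int n"
proof -
  have "\<exists>d \<in> {1, -1, int k, - int k}. [int j = int i + d] (mod int n)"
    using assms by (auto simp: Pb_edge_def)
  moreover have "(int j - int i) mod int n = d mod int n" if "[int j = int i + d] (mod int n)" for d
    using that unfolding cong_def by (metis add_diff_cancel_left' mod_diff_left_eq)
  ultimately show ?thesis using that by blast
qed

lemma Pb_multiplier_hom_K_circ:
  assumes "n > 0"
    and "s \<le> real_of_int (circ_norm (int n) c)" "s \<le> real_of_int (circ_norm (int n) (c * int k))"
  shows "\<exists>\<sigma> :: nat \<Rightarrow> nat. (\<forall>i<n. \<sigma> i < n) \<and>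
           (\<forall>i j. Pb_edge n k i j \<longrightarrow> K_circ_edge n s (\<sigma> i) (\<sigma> j))"
proof -
  define \<sigma> where "\<sigma> i = nat ((c * int i) mod int n)" for i
  have \<sigma>_int: "int (\<sigma> i) = (c * int i) mod int n" for i
    using assms(1) by (simp add: \<sigma>_def)
  have \<sigma>_less: "\<sigma> i < n" for i
    using assms(1) \<sigma>_int[of i] by (metis of_nat_0_less_iff of_nat_less_iff pos_mod_bound)
  have "K_circ_edge n s (\<sigma> i) (\<sigma> j)" if edge: "Pb_edge n k i j" for i j
  proof -
    obtain d where d: "d \<in> {1, -1, int k, - int k}" "(int j - int i) mod int n = d mod int n"
      using Pb_edge_diff_mod[OF edge] .
    have "(int (\<sigma> j) - int (\<sigma> i)) mod int n = (c * (int j - int i)) mod int n"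
      unfolding \<sigma>_int by (simp add: mod_diff_eq right_diff_distrib)
    also have "\<dots> = (c * d) mod int n"
      using d(2) by (metis mod_mult_right_eq)
    finally have "int (circ_dist n (\<sigma> i) (\<sigma> j)) = circ_norm (int n) (c * d)"
      using circ_dist_eq_circ_norm[OF \<sigma>_less \<sigma>_less] circ_norm_cong by metis
    moreover have "s \<le> real_of_int (circ_norm (int n) (c * d))"
      using d(1) assms circ_norm_uminus[of "int n"] by auto
    ultimately show ?thesis
      using \<sigma>_less by (simp add: K_circ_edge_def)
  qed
  then show ?thesis using \<sigma>_less by blast
qed

lemma Pb_multiplier_exists:
  fixes N K q e :: int
  assumes N: "N = q * (K - 1) + 2 * e" and e: "e = 1 \<or> e = -1"
    and "odd N" "even K" "K \<ge> 4" "2 * K \<le> N"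
  obtains c where "(N - 4) * (K - 2) \<le> 2 * (K - 1) * circ_norm N c"
    and "(N - 4) * (K - 2) \<le> 2 * (K - 1) * circ_norm N (c * K)"
proof -
  obtain t where t: "K = 2 * t" using \<open>even K\<close> by blast
  have "odd q" using \<open>odd N\<close> N by auto
  have "q \<ge> 2"
  proof (rule ccontr)
    assume "\<not> q \<ge> 2"
    then have "q * (K - 1) \<le> K - 1" using \<open>K \<ge> 4\<close> mult_right_mono[of q 1 "K - 1"] by simp
    then show False using N e \<open>K \<ge> 4\<close> \<open>2 * K \<le> N\<close> by linarith
  qed
  have "even (N - q)" using \<open>odd N\<close> \<open>odd q\<close> by simp
  then obtain c where c: "N - q = 2 * c" by (rule evenE)
  have cK: "c * K = c + e + N * (t - 1)"
    using N c t by (simp add: algebra_simps)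
  have "3 * q \<le> q * (K - 1)" using \<open>q \<ge> 2\<close> \<open>K \<ge> 4\<close> by (simp add: mult.commute)
  moreover have "-1 \<le> e" "e \<le> 1" using e by auto
  ultimately have c_range: "0 \<le> c" "2 * c \<le> N" "0 \<le> c + e" "2 * c + 2 * e \<le> N"
    using c N \<open>q \<ge> 2\<close> by linarith+
  have "circ_norm N c = c" using c_range by (intro circ_norm_eq_self) auto
  moreover have "circ_norm N (c * K) = c + e"
    unfolding cK using circ_norm_cong[OF mod_mult_self2] c_range by (simp add: circ_norm_eq_self)
  moreover have "(N - 4) * (K - 2) \<le> 2 * (K - 1) * x" if "x = c \<or> x = c + e" for x
    using that e c N \<open>K \<ge> 4\<close> by (auto simp: algebra_simps)
  ultimately show ?thesis using that by auto
qed

lemma cong_pm2_decompose: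
  fixes N m :: int
  assumes "[N = 2] (mod m) \<or> [N = - 2] (mod m)"
  obtains q e where "N = q * m + 2 * e" "e = 1 \<or> e = -1"
proof -
  have "m dvd N - 2 \<or> m dvd N + 2"
    using assms by (simp add: cong_iff_dvd_diff)
  then show ?thesis
  proof
    assume "m dvd N - 2"
    then obtain q where "N - 2 = m * q" ..
    then show ?thesis using that[of q 1] by (simp add: algebra_simps)
  next
    assume "m dvd N + 2"
    then obtain q where "N + 2 = m * q" ..
    then show ?thesis using that[of q "-1"] by (simp add: algebra_simps)
  qed
qed

theorem theorem5:
  fixes n k :: nat
  assumes "odd n" and "even k" and "k \<ge> 4" and "2 * k \<le> n"
    and "[int n = 2] (mod int (k - 1)) \<or> [int n = - 2] (mod int (k - 1))"
  shows "\<exists>\<sigma> :: nat \<Rightarrow> nat. (\<forall>i<n. \<sigma> i < n) \<and>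
           (\<forall>i j. Pb_edge n k i j \<longrightarrow>
              K_circ_edge n ((real n - 4) * (real k - 2) / (2 * (real k - 1))) (\<sigma> i) (\<sigma> j))"
proof -
  have "int (k - 1) = int k - 1" using assms(3) by simp
  then obtain q e where "int n = q * (int k - 1) + 2 * e" "e = 1 \<or> e = -1"
    using cong_pm2_decompose[OF assms(5)] by metis
  moreover have "odd (int n)" "even (int k)" "int k \<ge> 4" "2 * int k \<le> int n"
    using assms(1-4) by simp_all
  ultimately obtain c where
      "(int n - 4) * (int k - 2) \<le> 2 * (int k - 1) * circ_norm (int n) c"
      "(int n - 4) * (int k - 2) \<le> 2 * (int k - 1) * circ_norm (int n) (c * int k)"
    by (rule Pb_multiplier_exists)
  moreover have "(real n - 4) * (real k - 2) / (2 * (real k - 1)) \<le> real_of_int x"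
    if "(int n - 4) * (int k - 2) \<le> 2 * (int k - 1) * x" for x
  proof -
    have "(real n - 4) * (real k - 2) \<le> 2 * (real k - 1) * real_of_int x"
      using of_int_le_iff[where 'a=real, THEN iffD2, OF that] by simp
    then show ?thesis using assms(3) by (simp add: divide_simps mult.commute)
  qed
  ultimately show ?thesis using assms(3,4) by (intro Pb_multiplier_hom_K_circ) auto
qed

end
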